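(* Let $g:\mathbb{Z}_{\ge 0}\to\mathbb{R}$ be a linearly progressing opponent process (LPOP) with switching time $\tau_0\ge 1$ (so $g(0)>0$) and constant $\alpha\in[0,1)$. Let $T\ge 1$ be an integer, let $y_{\min}\in\mathbb{R}$, and let $(y^{\mathrm{nat}}_t)_{t\ge 0}$ be an arbitrary real sequence (the natural progression). For a dosing sequence $u=(u_0,\dots,u_{T-1})$ of nonnegative reals, define the well-being sequence by $y_0=y^{\mathrm{nat}}_0$ and $$y_{t+1}=\sum_{k=0}^{t} g(k)\,u_{t-k}+y^{\mathrm{nat}}_{t+1},\qquad t=0,\dots,T-1.$$ Let $u^{\mathrm{MED}}$ be the dosing sequence in which, for each $t=0,\dots,T-1$ in turn, $u^{\mathrm{MED}}_t$ is the minimum effective dose given the previous doses $u^{\mathrm{MED}}_0,\dots,u^{\mathrm{MED}}_{t-1}$, i.e. $$u^{\mathrm{MED}}_t=\max\left\{0,\ \frac{y_{\min}-y^{\mathrm{nat}}_{t+1}-\sum_{k=1}^{t} g(k)\,u^{\mathrm{MED}}_{t-k}}{g(0)}\right\}.$$ Then the well-being sequence produced by $u^{\mathrm{MED}}$ satisfies $y_t\ge y_{\min}$ for all $t=1,\dots,T$, and for every nonnegative dosing sequence $u'=(u'_0,\dots,u'_{T-1})$ whose well-being sequence satisfies $y'_t\ge y_{\min}$ for all $t=1,\dots,T$, we have $\sum_{t=0}^{T-1}u^{\mathrm{MED}}_t\le\sum_{t=0}^{T-1}u'_t$.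
   Context: An impulse response $g:\mathbb{Z}_{\ge0}\to\mathbb{R}$ is an opponent process if there is a time $\tau_0$ with $g(\tau)>0$ for $\tau<\tau_0$ and $g(\tau)\le 0$ for $\tau\ge\tau_0$. It is a linearly progressing opponent process (LPOP) if in addition there is $\alpha\in[0,1)$ with $g(t+1)\le\alpha\,g(t)$ for all $t<\tau_0-1$ and $|g(t+1)|\ge\alpha\,|g(t)|$ for all $t\ge\tau_0$. Doses are required to be nonnegative. The minimum effective dose (MED) at time $t$ is the smallest nonnegative dose $u_t$ (given the past doses) that does not cause $y_{t+1}<y_{\min}$; equivalently it yields $y_{t+1}=y_{\min}$, or it equals $0$ when dose $0$ already yields $y_{t+1}\ge y_{\min}$. *)

theory Defs
  imports Complex_Main
begin

definition opponent_process :: "(nat \<Rightarrow> real) \<Rightarrow> nat \<Rightarrow> bool" where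
  "opponent_process g tau0 \<longleftrightarrow>
     (\<forall>\<tau>. \<tau> < tau0 \<longrightarrow> g \<tau> > 0) \<and> (\<forall>\<tau>. \<tau> \<ge> tau0 \<longrightarrow> g \<tau> \<le> 0)"

text \<open>Linearly progressing opponent process (LPOP) with switching time tau0 and constant alpha.
  The condition t < tau0 - 1 is written t + 1 < tau0.\<close>
definition lpop :: "(nat \<Rightarrow> real) \<Rightarrow> nat \<Rightarrow> real \<Rightarrow> bool" where
  "lpop g tau0 \<alpha> \<longleftrightarrow> opponent_process g tau0 \<and> 0 \<le> \<alpha> \<and> \<alpha> < 1 \<and>
     (\<forall>t. t + 1 < tau0 \<longrightarrow> g (t + 1) \<le> \<alpha> * g t) \<and>
     (\<forall>t. t \<ge> tau0 \<longrightarrow> \<bar>g (t + 1)\<bar> \<ge> \<alpha> * \<bar>g t\<bar>)"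

fun wellbeing :: "(nat \<Rightarrow> real) \<Rightarrow> (nat \<Rightarrow> real) \<Rightarrow> (nat \<Rightarrow> real) \<Rightarrow> nat \<Rightarrow> real" where
  "wellbeing g ynat u 0 = ynat 0"
| "wellbeing g ynat u (Suc t) = (\<Sum>k\<le>t. g k * u (t - k)) + ynat (Suc t)"

fun med_list :: "(nat \<Rightarrow> real) \<Rightarrow> (nat \<Rightarrow> real) \<Rightarrow> real \<Rightarrow> nat \<Rightarrow> real list" where
  "med_list g ynat ymin 0 = []"
| "med_list g ynat ymin (Suc t) =
     (let us = med_list g ynat ymin t in
      us @ [max 0 ((ymin - ynat (Suc t) - (\<Sum>k\<in>{1..t}. g k * us ! (t - k))) / g 0)])"

definition umed :: "(nat \<Rightarrow> real) \<Rightarrow> (nat \<Rightarrow> real) \<Rightarrow> real \<Rightarrow> nat \<Rightarrow> real" where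
  "umed g ynat ymin t = med_list g ynat ymin (Suc t) ! t"

end

(*
  For optimality, take a feasible dosing u that
  agrees with MED before time k. Feasibility of y at time k + 1 forces u k \<ge> MED k. Removing the
  excess e = u k - MED k at time k and adding \<alpha> * e at time k + 1 changes y at every later time
  n + 1 by e * (\<alpha> * g (n - k - 1) - g (n - k)), which is nonnegative because every LPOP satisfies
  g (j + 1) \<le> \<alpha> * g j; since \<alpha> < 1 the total dose does not increase. Repeating this for
  k = 0, ..., T - 1 turns u into MED without increasing its cost.
*)
theory Submission
  imports Defs
begin

lemma sum_fun_upd:
  fixes f :: "'a \<Rightarrow> 'b::ab_group_add"
  assumes "finite A"
  shows "sum (f(m := x)) A = sum f A + (if m \<in> A then x - f m else 0)"
proof (cases "m \<in> A")
  case True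
  then show ?thesis
    using assms by (simp add: sum.remove[of A m] sum.cong[of "A - {m}" _ "f(m := x)" f])
qed (auto intro: sum.cong)

lemma length_med_list: "length (med_list g ynat ymin t) = t"
  by (induction t) (simp_all add: Let_def)

lemma nth_med_list: "i < t \<Longrightarrow> med_list g ynat ymin t ! i = umed g ynat ymin i"
proof (induction t)
  case (Suc t)
  then show ?case
  proof (cases "i < t")
    case False
    then have "i = t" using Suc.prems by simp
    then show ?thesis by (simp add: umed_def)
  qed (simp add: Let_def nth_append length_med_list Suc.IH)
qed simp

lemma umed_rec:
  "umed g ynat ymin t =
     max 0 ((ymin - ynat (Suc t) - (\<Sum>k\<in>{1..t}. g k * umed g ynat ymin (t - k))) / g 0)"
proof -
  have "(\<Sum>k\<in>{1..t}. g k * med_list g ynat ymin t ! (t - k)) =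
        (\<Sum>k\<in>{1..t}. g k * umed g ynat ymin (t - k))"
    by (rule sum.cong) (auto simp: nth_med_list)
  then show ?thesis
    by (simp add: umed_def Let_def nth_append length_med_list)
qed

lemma umed_nonneg: "0 \<le> umed g ynat ymin t"
  by (subst umed_rec) simp

lemma wellbeing_Suc_split:
  "wellbeing g ynat u (Suc t) = g 0 * u t + (\<Sum>k\<in>{1..t}. g k * u (t - k)) + ynat (Suc t)"
proof -
  have "{..t} = insert 0 {1..t}" by auto
  then show ?thesis by simp
qed

lemma wellbeing_cong:
  assumes "\<And>i. i < t \<Longrightarrow> u i = v i"
  shows "wellbeing g ynat u t = wellbeing g ynat v t"
  using assms by (cases t) (auto intro!: sum.cong)

lemma wellbeing_fun_upd:
  "wellbeing g ynat (u(m := x)) (Suc n) =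
     wellbeing g ynat u (Suc n) + (if m \<le> n then g (n - m) * (x - u m) else 0)"
proof -
  have "(\<Sum>j\<le>n. g j * (u(m := x)) (n - j)) =
          (\<Sum>j\<le>n. g j * u (n - j) +
             (if j = n - m then (if m \<le> n then g j * (x - u m) else 0) else 0))"
    by (rule sum.cong) (auto simp: algebra_simps)
  also have "\<dots> = (\<Sum>j\<le>n. g j * u (n - j)) + (if m \<le> n then g (n - m) * (x - u m) else 0)"
    by (simp add: sum.distrib sum.delta)
  finally show ?thesis by simp
qed

definition feasible_dosing ::
    "(nat \<Rightarrow> real) \<Rightarrow> (nat \<Rightarrow> real) \<Rightarrow> real \<Rightarrow> nat \<Rightarrow> (nat \<Rightarrow> real) \<Rightarrow> bool" where
  "feasible_dosing g ynat ymin T u \<longleftrightarrow>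
     (\<forall>t<T. u t \<ge> 0) \<and> (\<forall>t\<in>{1..T}. wellbeing g ynat u t \<ge> ymin)"

lemma wellbeing_umed_Suc_ge:
  assumes "0 < g 0"
  shows "ymin \<le> wellbeing g ynat (umed g ynat ymin) (Suc t)"
proof -
  let ?x = "ymin - ynat (Suc t) - (\<Sum>k\<in>{1..t}. g k * umed g ynat ymin (t - k))"
  have "?x = g 0 * (?x / g 0)"
    using assms by simp
  also have "\<dots> \<le> g 0 * umed g ynat ymin t"
    using assms by (subst umed_rec) (intro mult_left_mono; simp)
  finally show ?thesis
    unfolding wellbeing_Suc_split by linarith
qed

lemma feasible_dosing_umed:
  assumes "0 < g 0"
  shows "feasible_dosing g ynat ymin T (umed g ynat ymin)"
  unfolding feasible_dosing_def
proof (intro conjI ballI allI impI)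
  fix t assume "t \<in> {1..T}"
  then obtain n where "t = Suc n" by (cases t) auto
  then show "ymin \<le> wellbeing g ynat (umed g ynat ymin) t"
    using wellbeing_umed_Suc_ge[of g, OF assms] by simp
qed (rule umed_nonneg)

lemma umed_le_feasible_dose:
  assumes "0 < g 0" and "0 \<le> u k" and "ymin \<le> wellbeing g ynat u (Suc k)"
    and "\<And>i. i < k \<Longrightarrow> u i = umed g ynat ymin i"
  shows "umed g ynat ymin k \<le> u k"
proof -
  let ?x = "ymin - ynat (Suc k) - (\<Sum>j\<in>{1..k}. g j * umed g ynat ymin (k - j))"
  have "(\<Sum>j\<in>{1..k}. g j * u (k - j)) = (\<Sum>j\<in>{1..k}. g j * umed g ynat ymin (k - j))"
    using assms(4) by (intro sum.cong) auto
  then have "?x \<le> g 0 * u k"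
    using assms(3) unfolding wellbeing_Suc_split by linarith
  then have "?x / g 0 \<le> u k"
    using assms(1) by (simp add: pos_divide_le_eq mult.commute)
  then show ?thesis
    using assms(2) by (subst umed_rec) simp
qed

lemma lpop_decay:
  assumes "lpop g tau0 \<alpha>"
  shows "g (Suc j) \<le> \<alpha> * g j"
proof -
  from assms have pos: "\<And>\<tau>. \<tau> < tau0 \<Longrightarrow> g \<tau> > 0" and nonpos: "\<And>\<tau>. \<tau> \<ge> tau0 \<Longrightarrow> g \<tau> \<le> 0"
    and "0 \<le> \<alpha>"
    and before: "\<And>t. t + 1 < tau0 \<Longrightarrow> g (t + 1) \<le> \<alpha> * g t"
    and after: "\<And>t. t \<ge> tau0 \<Longrightarrow> \<bar>g (t + 1)\<bar> \<ge> \<alpha> * \<bar>g t\<bar>"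
    unfolding lpop_def opponent_process_def by auto
  consider "Suc j < tau0" | "Suc j = tau0" | "j \<ge> tau0" by linarith
  then show ?thesis
  proof cases
    case 1
    then show ?thesis using before[of j] by simp
  next
    case 2
    then have "g (Suc j) \<le> 0" and "0 < g j" using pos nonpos by auto
    then show ?thesis using mult_nonneg_nonneg[OF \<open>0 \<le> \<alpha>\<close>, of "g j"] by linarith
  next
    case 3
    then show ?thesis using after[of j] nonpos[of j] nonpos[of "Suc j"] by simp
  qed
qed

lemma wellbeing_delay_dose_ge:
  assumes "lpop g tau0 \<alpha>" and "0 \<le> e" and "k < n"
  shows "wellbeing g ynat u (Suc n) \<le>
           wellbeing g ynat (u(k := u k - e, Suc k := u (Suc k) + \<alpha> * e)) (Suc n)"
proof -
  have "wellbeing g ynat (u(k := u k - e, Suc k := u (Suc k) + \<alpha> * e)) (Suc n) =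
          wellbeing g ynat u (Suc n) + e * (\<alpha> * g (n - Suc k) - g (n - k))"
    using assms(3) by (simp only: wellbeing_fun_upd) (simp add: algebra_simps del: wellbeing.simps)
  moreover have "g (n - k) \<le> \<alpha> * g (n - Suc k)"
    using lpop_decay[OF assms(1), of "n - Suc k"] assms(3) by (simp add: Suc_diff_Suc)
  ultimately show ?thesis
    using assms(2) by simp
qed

lemma sum_delay_dose_le:
  fixes u :: "nat \<Rightarrow> 'a::linordered_idom"
  assumes "\<alpha> \<le> 1" and "0 \<le> e" and "k < T"
  shows "sum (u(k := u k - e, Suc k := u (Suc k) + \<alpha> * e)) {..<T} \<le> sum u {..<T}"
proof -
  have "sum (u(k := u k - e, Suc k := u (Suc k) + \<alpha> * e)) {..<T} =
          sum u {..<T} - e + (if Suc k < T then \<alpha> * e else 0)"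
    using assms(3) unfolding sum_fun_upd[OF finite_lessThan] by simp
  moreover have "\<alpha> * e \<le> e"
    using mult_right_mono[OF assms(1,2)] by simp
  ultimately show ?thesis
    using assms(2) by auto
qed

lemma feasible_dosing_agree_umed_Suc:
  assumes "lpop g tau0 \<alpha>" and "0 < g 0" and "feasible_dosing g ynat ymin T u" and "k < T"
    and "\<And>i. i < k \<Longrightarrow> u i = umed g ynat ymin i"
  obtains v where "feasible_dosing g ynat ymin T v"
    and "\<And>i. i < Suc k \<Longrightarrow> v i = umed g ynat ymin i"
    and "(\<Sum>t<T. v t) \<le> (\<Sum>t<T. u t)"
proof -
  let ?M = "umed g ynat ymin"
  define e where "e = u k - ?M k"
  define v where "v = u(k := u k - e, Suc k := u (Suc k) + \<alpha> * e)"
  have "0 \<le> \<alpha>" "\<alpha> < 1"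
    using assms(1) unfolding lpop_def by auto
  have u_nonneg: "\<forall>t<T. 0 \<le> u t" and u_above: "\<forall>t\<in>{1..T}. ymin \<le> wellbeing g ynat u t"
    using assms(3) unfolding feasible_dosing_def by auto
  have "?M k \<le> u k"
  proof (rule umed_le_feasible_dose[where g = g, OF assms(2)])
    show "0 \<le> u k" using u_nonneg assms(4) by simp
    show "ymin \<le> wellbeing g ynat u (Suc k)"
      using u_above assms(4) by (auto simp del: wellbeing.simps)
  qed (rule assms(5))
  then have "0 \<le> e"
    unfolding e_def by simp
  have agree: "v i = ?M i" if "i < Suc k" for i
    using that assms(5) by (auto simp: v_def e_def)
  have "0 \<le> v t" if "t < T" for t
    using that u_nonneg umed_nonneg[of g ynat ymin k] \<open>0 \<le> \<alpha>\<close> \<open>0 \<le> e\<close>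
    by (auto simp: v_def e_def)
  moreover have "ymin \<le> wellbeing g ynat v t" if t: "t \<in> {1..T}" for t
  proof -
    obtain n where n: "t = Suc n" "n < T"
      using t by (cases t) auto
    consider "n < k" | "n = k" | "k < n" by linarith
    then show ?thesis
    proof cases
      case 1
      then have "wellbeing g ynat v t = wellbeing g ynat u t"
        unfolding n by (intro wellbeing_cong) (auto simp: v_def)
      then show ?thesis using u_above t by simp
    next
      case 2
      then have "wellbeing g ynat v t = wellbeing g ynat ?M t"
        unfolding n by (intro wellbeing_cong) (simp add: agree)
      then show ?thesis using wellbeing_umed_Suc_ge[of g, OF assms(2)] n by simp
    next
      case 3
      then show ?thesis
        using wellbeing_delay_dose_ge[OF assms(1) \<open>0 \<le> e\<close> 3, of ynat u] u_above t n
        unfolding v_def by fastforce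
    qed
  qed
  ultimately have "feasible_dosing g ynat ymin T v"
    unfolding feasible_dosing_def by auto
  moreover have "(\<Sum>t<T. v t) \<le> (\<Sum>t<T. u t)"
    unfolding v_def using \<open>\<alpha> < 1\<close> \<open>0 \<le> e\<close> assms(4) by (intro sum_delay_dose_le) simp_all
  ultimately show ?thesis
    using that agree by blast
qed

lemma umed_sum_le_feasible:
  assumes "lpop g tau0 \<alpha>" and "0 < g 0" and "feasible_dosing g ynat ymin T u" and "k \<le> T"
    and "\<And>i. i < k \<Longrightarrow> u i = umed g ynat ymin i"
  shows "(\<Sum>t<T. umed g ynat ymin t) \<le> (\<Sum>t<T. u t)"
  using assms(4,3,5)
proof (induction k arbitrary: u rule: inc_induct)
  case base
  then show ?case by (intro sum_mono) simp
next
  case (step n)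
  obtain v where v_feasible: "feasible_dosing g ynat ymin T v"
    and v_agrees: "\<And>i. i < Suc n \<Longrightarrow> v i = umed g ynat ymin i"
    and v_cheaper: "(\<Sum>t<T. v t) \<le> (\<Sum>t<T. u t)"
    using feasible_dosing_agree_umed_Suc[OF assms(1,2) step.prems(1) step.hyps(2) step.prems(2)] by blast
  have "(\<Sum>t<T. umed g ynat ymin t) \<le> (\<Sum>t<T. v t)"
    using v_feasible v_agrees by (rule step.IH)
  with v_cheaper show ?case
    by linarith
qed

theorem theorem1:
  fixes g ynat :: "nat \<Rightarrow> real" and tau0 T :: nat and \<alpha> ymin :: real
  assumes "lpop g tau0 \<alpha>" and "tau0 \<ge> 1" and "T \<ge> 1"
  shows "(\<forall>t\<in>{1..T}. wellbeing g ynat (umed g ynat ymin) t \<ge> ymin) \<and>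
         (\<forall>u'. (\<forall>t<T. u' t \<ge> 0) \<longrightarrow> (\<forall>t\<in>{1..T}. wellbeing g ynat u' t \<ge> ymin) \<longrightarrow>
            (\<Sum>t<T. umed g ynat ymin t) \<le> (\<Sum>t<T. u' t))"
proof -
  have "0 < g 0"
    using assms(1,2) unfolding lpop_def opponent_process_def by auto
  then have "feasible_dosing g ynat ymin T (umed g ynat ymin)"
    by (rule feasible_dosing_umed)
  moreover have "(\<Sum>t<T. umed g ynat ymin t) \<le> (\<Sum>t<T. u' t)"
    if "feasible_dosing g ynat ymin T u'" for u'
    using umed_sum_le_feasible[OF assms(1) \<open>0 < g 0\<close> that, of 0] by simp
  ultimately show ?thesis
    unfolding feasible_dosing_def by blast
qed

end
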